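(* Let $\mathcal{H}$ be a real Hilbert space, let $A,B:\mathcal{H}\rightrightarrows\mathcal{H}$ be operators and let $\beta\in{]0,1[}$. Then \[ \operatorname{zer}\left(A^{(\beta)}+B^{(\beta)}\right)=\beta J_{\frac{1}{2(1-\beta)}(A+B)}(0). \] Consequently, $\operatorname{zer}\left(A^{(\beta)}+B^{(\beta)}\right)\neq\emptyset$ if and only if $0\in\operatorname{ran}\left(\operatorname{Id}+\frac{1}{2(1-\beta)}(A+B)\right)$.
   Context: The resolvent of an operator $T$ is $J_T:=(\operatorname{Id}+T)^{-1}$, i.e. $J_T(x)=\{y: x\in y+T(y)\}$ (a set). The $\beta$-strengthening of $A$ is $A^{(\beta)}(x):=\left(A+(1-\beta)\operatorname{Id}\right)\left(\frac{x}{\beta}\right)$. $\operatorname{zer}T=\{x:0\in T(x)\}$; $\operatorname{ran}$ denotes the range. *)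

theory Defs
  imports "HOL-Analysis.Analysis"
begin

text \<open>Set-valued operators on a real Hilbert space 'a, represented as 'a \<Rightarrow> 'a set.\<close>

type_synonym 'a operator = "'a \<Rightarrow> 'a set"

definition op_add :: "('a::real_vector) operator \<Rightarrow> 'a operator \<Rightarrow> 'a operator" where
  "op_add A B = (\<lambda>x. {a + b | a b. a \<in> A x \<and> b \<in> B x})"

definition op_scale :: "real \<Rightarrow> ('a::real_vector) operator \<Rightarrow> 'a operator" where
  "op_scale c T = (\<lambda>x. (\<lambda>y. c *\<^sub>R y) ` T x)"

definition op_id :: "('a::real_vector) operator" where
  "op_id = (\<lambda>x. {x})"

definition resolvent :: "('a::real_vector) operator \<Rightarrow> 'a operator" where
  "resolvent T = (\<lambda>x. {y. x \<in> op_add op_id T y})"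

definition strengthening :: "real \<Rightarrow> ('a::real_vector) operator \<Rightarrow> 'a operator" where
  "strengthening \<beta> A = (\<lambda>x. op_add A (op_scale (1 - \<beta>) op_id) ((1 / \<beta>) *\<^sub>R x))"

definition zer :: "('a::real_vector) operator \<Rightarrow> 'a set" where
  "zer T = {x. 0 \<in> T x}"

definition ran :: "('a::real_vector) operator \<Rightarrow> 'a set" where
  "ran T = (\<Union>x. T x)"

end

theory Submission
  imports Defs
begin

(* Substituting x = \<beta> y undoes the rescaling inside both strengthenings, so
   0 \<in> A^(\<beta>)(x) + B^(\<beta>)(x) reads 0 \<in> A y + B y + 2(1 - \<beta>) y. Dividing by
   2(1 - \<beta>) > 0 turns this into 0 \<in> y + (A + B) y / (2(1 - \<beta>)), which says
   exactly that y lies in the resolvent of (A + B) / (2(1 - \<beta>)) at 0. *)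

lemma zero_in_op_add_op_id_scale_iff:
  fixes T :: "('a::real_vector) operator"
  assumes "c \<noteq> 0"
  shows "0 \<in> op_add op_id (op_scale (1 / c) T) y \<longleftrightarrow> (\<exists>t\<in>T y. c *\<^sub>R y + t = 0)"
proof -
  have "y + (1 / c) *\<^sub>R t = 0 \<longleftrightarrow> c *\<^sub>R y + t = 0" for t
  proof -
    have "c *\<^sub>R (y + (1 / c) *\<^sub>R t) = c *\<^sub>R y + t"
      using assms by (simp add: scaleR_add_right)
    then show ?thesis
      using assms by (metis scaleR_eq_0_iff)
  qed
  then show ?thesis
    unfolding op_add_def op_scale_def op_id_def by auto
qed

lemma zero_in_strengthening_sum_iff:
  fixes A B :: "('a::real_vector) operator"
  assumes "0 < \<beta>" and "\<beta> < 1"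
  shows "0 \<in> op_add (strengthening \<beta> A) (strengthening \<beta> B) (\<beta> *\<^sub>R y)
     \<longleftrightarrow> 0 \<in> op_add op_id (op_scale (1 / (2 * (1 - \<beta>))) (op_add A B)) y"
proof -
  have unscale: "(1 / \<beta>) *\<^sub>R (\<beta> *\<^sub>R y) = y"
    using assms by simp
  have regroup: "a + (1 - \<beta>) *\<^sub>R y + (b + (1 - \<beta>) *\<^sub>R y) = (2 * (1 - \<beta>)) *\<^sub>R y + (a + b)"
    for a b :: 'a
    by (simp add: algebra_simps flip: scaleR_2)
  have "0 \<in> op_add (strengthening \<beta> A) (strengthening \<beta> B) (\<beta> *\<^sub>R y)
      \<longleftrightarrow> (\<exists>a\<in>A y. \<exists>b\<in>B y. a + (1 - \<beta>) *\<^sub>R y + (b + (1 - \<beta>) *\<^sub>R y) = 0)"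
    unfolding strengthening_def op_add_def op_scale_def op_id_def unscale by auto
  also have "\<dots> \<longleftrightarrow> (\<exists>t\<in>op_add A B y. (2 * (1 - \<beta>)) *\<^sub>R y + t = 0)"
    unfolding regroup op_add_def by blast
  also have "\<dots> \<longleftrightarrow> 0 \<in> op_add op_id (op_scale (1 / (2 * (1 - \<beta>))) (op_add A B)) y"
    using assms by (simp add: zero_in_op_add_op_id_scale_iff)
  finally show ?thesis .
qed

lemma zer_eq_scaleR_image:
  fixes S :: "('a::real_vector) operator"
  assumes "\<beta> \<noteq> 0" and "\<And>y. 0 \<in> S (\<beta> *\<^sub>R y) \<longleftrightarrow> P y"
  shows "zer S = (\<lambda>y. \<beta> *\<^sub>R y) ` {y. P y}"
proof (intro set_eqI iffI)
  fix x
  assume "x \<in> zer S"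
  moreover have "x = \<beta> *\<^sub>R ((1 / \<beta>) *\<^sub>R x)"
    using assms(1) by simp
  ultimately show "x \<in> (\<lambda>y. \<beta> *\<^sub>R y) ` {y. P y}"
    using assms(2) unfolding zer_def by (metis image_eqI mem_Collect_eq)
qed (use assms(2) in \<open>auto simp: zer_def\<close>)

lemma resolvent_at_zero:
  "resolvent T 0 = {y. 0 \<in> op_add op_id T y}"
  by (simp add: resolvent_def)

theorem proposition3p4:
  fixes A B :: "('a::{real_inner, complete_space}) operator" and \<beta> :: real
  assumes "0 < \<beta>" and "\<beta> < 1"
  shows "zer (op_add (strengthening \<beta> A) (strengthening \<beta> B))
           = (\<lambda>y. \<beta> *\<^sub>R y) ` resolvent (op_scale (1 / (2 * (1 - \<beta>))) (op_add A B)) 0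
         \<and> (zer (op_add (strengthening \<beta> A) (strengthening \<beta> B)) \<noteq> {}
           \<longleftrightarrow> 0 \<in> ran (op_add op_id (op_scale (1 / (2 * (1 - \<beta>))) (op_add A B))))"
proof -
  let ?T = "op_add op_id (op_scale (1 / (2 * (1 - \<beta>))) (op_add A B))"
  have zer_eq: "zer (op_add (strengthening \<beta> A) (strengthening \<beta> B)) = (\<lambda>y. \<beta> *\<^sub>R y) ` {y. 0 \<in> ?T y}"
    using assms by (intro zer_eq_scaleR_image) (simp_all add: zero_in_strengthening_sum_iff)
  show ?thesis
    unfolding zer_eq resolvent_at_zero by (auto simp: ran_def)
qed

end
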